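(* Let $\hat N$ be a population size estimator which is consistent for the model consisting of all probability vectors $(p_x)_{x\in\{0,1\}^L}$ with all $p_x>0$ and $\gamma=0$. Consider the latent heterogeneity model in which $\lambda_i$ are independent with distribution $F$ supported on $(0,1]$ and $\mathbb{P}(W_i=x\mid\lambda_i)=\lambda_i^{|x|}(1-\lambda_i)^{L-|x|}$, so that $p_x=\mathbb{E}[\lambda_i^{|x|}(1-\lambda_i)^{L-|x|}]$. If $L=2$, then necessarily $\lim_{N\to\infty}(\hat N-N)/N\le 0$. With three or more lists ($L\ge3$), the asymptotic relative bias $\lim_{N\to\infty}(\hat N-N)/N$ is positive for some such distributions $F$ and negative for others.
   Context: Multiple systems estimation setting with $L$ lists: individuals $i=1,2,3,\dots$ have independent, identically distributed list inclusion patterns $W_i\in\{0,1\}^L$ with $\mathbb{P}(W_i=x)=p_x$; $\mathbf{0}=(0,\dots,0)$ denotes non-observation, and $|x|=\sum_j x_j$. For population size $N$, observed counts are $n_x^{(N)}=\#\{i\le N:W_i=x\}$, $x\ne\mathbf{0}$. A population size estimator is a function of the observed counts; it is consistent for a model if $\hat N/N\to1$ almost surely as $N\to\infty$ whenever $(p_x)$ belongs to the model. The full-way interaction term is $\gamma=\sum_{x\in\{0,1\}^L}(-1)^{|x|+1}\log p_x$. The asymptotic relative bias is $\lim_{N\to\infty}(\hat N-N)/N$ (almost sure limit). *)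

theory Defs
  imports "HOL-Probability.Probability"
begin

text \<open>Inclusion patterns x in {0,1}^L are bool lists of length L; the count |x| is
  the number of True entries; the non-observation pattern is replicate L False.\<close>

definition patterns :: "nat \<Rightarrow> bool list set" where
  "patterns L = {x. length x = L}"

definition wt :: "bool list \<Rightarrow> nat" where
  "wt x = length (filter id x)"

definition iid :: "bool list pmf \<Rightarrow> (nat \<Rightarrow> bool list) measure" where
  "iid P = PiM UNIV (\<lambda>_::nat. measure_pmf P)"

text \<open>Observed counts n_x^(N) for x nonzero (set to 0 at the pattern 0 and at non-patterns).\<close>
definition counts :: "nat \<Rightarrow> nat \<Rightarrow> (nat \<Rightarrow> bool list) \<Rightarrow> bool list \<Rightarrow> nat" where
  "counts L N \<omega> = (\<lambda>x. if x \<in> patterns L \<and> x \<noteq> replicate L False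
                        then card {i. i < N \<and> \<omega> i = x} else 0)"

definition gamma :: "nat \<Rightarrow> bool list pmf \<Rightarrow> real" where
  "gamma L P = (\<Sum>x\<in>patterns L. (-1) ^ (wt x + 1) * ln (pmf P x))"

definition in_model :: "nat \<Rightarrow> bool list pmf \<Rightarrow> bool" where
  "in_model L P \<longleftrightarrow> set_pmf P \<subseteq> patterns L \<and> (\<forall>x\<in>patterns L. pmf P x > 0) \<and> gamma L P = 0"

definition consistent :: "nat \<Rightarrow> ((bool list \<Rightarrow> nat) \<Rightarrow> real) \<Rightarrow> bool" where
  "consistent L est \<longleftrightarrow> (\<forall>P. in_model L P \<longrightarrow>
      (AE \<omega> in iid P. (\<lambda>N. est (counts L N \<omega>) / real N) \<longlonglongrightarrow> 1))"

definition mixing_dist :: "real measure \<Rightarrow> bool" where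
  "mixing_dist F \<longleftrightarrow> prob_space F \<and> sets F = sets borel \<and> measure F {0<..1} = 1"

definition het_pmf :: "nat \<Rightarrow> real measure \<Rightarrow> bool list pmf" where
  "het_pmf L F = embed_pmf (\<lambda>x. if x \<in> patterns L
       then (LINT l|F. l ^ wt x * (1 - l) ^ (L - wt x)) else 0)"

definition asymp_rel_bias :: "nat \<Rightarrow> ((bool list \<Rightarrow> nat) \<Rightarrow> real) \<Rightarrow> real measure \<Rightarrow> real \<Rightarrow> bool" where
  "asymp_rel_bias L est F c \<longleftrightarrow>
     (AE \<omega> in iid (het_pmf L F). (\<lambda>N. (est (counts L N \<omega>) - real N) / real N) \<longlonglongrightarrow> c)"

end

(*
  The counts reveal only the conditional law Q of the observed patterns and the fraction of the
  population that is observed.  Write P as the mixture that puts mass q = p_0 on the unobserved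
  pattern and otherwise samples from Q.  Among such mixtures with the same Q exactly one, P',
  satisfies gamma = 0; its observation probability is s' = (1 - q) / (1 - q + q exp gamma(P)).
  Interleaving one i.i.d. Q-sample with two independent coin sequences of rates 1 - q and s'
  yields samples from P and from P' whose observed counts differ only by a time change, so a
  consistent estimator satisfies N_hat / N --> (1 - q) / s' = 1 + q (exp gamma(P) - 1) almost
  surely under P: the bias has the sign of gamma.

  In the heterogeneity model gamma is the alternating binomial sum of the logarithms of the
  moments m_k = E[lambda^k (1 - lambda)^(L - k)].  For L = 2 it equals ln (m_1^2 / (m_0 m_2)),
  which is nonpositive by Cauchy-Schwarz.  For L >= 3 the two-point mixing laws on {1, 1/2} and
  on {1 - eps^(L - 2), eps^2} with eps small give gamma of opposite signs: for the first, only
  m_L deviates from a geometric sequence; for the second, ln m_k is ln eps times a piecewise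
  linear function of k with a kink between L - 2 and L - 1, up to a bounded error.
*)

theory Submission
  imports Defs
begin

section \<open>Inclusion patterns\<close>

lemma wt_Nil [simp]: "wt [] = 0"
  and wt_Cons [simp]: "wt (b # x) = (if b then Suc (wt x) else wt x)"
  by (auto simp: wt_def)

lemma wt_replicate [simp]: "wt (replicate L b) = (if b then L else 0)"
  by (simp add: wt_def)

lemma replicate_in_patterns [simp]: "replicate L b \<in> patterns L"
  by (simp add: patterns_def)

lemma patterns_Suc: "patterns (Suc L) = Cons True ` patterns L \<union> Cons False ` patterns L"
  by (auto simp: patterns_def length_Suc_conv image_iff)

lemma finite_patterns [simp]: "finite (patterns L)"
  unfolding patterns_def using finite_lists_length_eq[of "UNIV :: bool set" L] by simp

lemma sum_patterns_wt:
  fixes f :: "nat \<Rightarrow> real"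
  shows "(\<Sum>x\<in>patterns L. f (wt x)) = (\<Sum>k\<le>L. of_nat (L choose k) * f k)"
proof (induction L arbitrary: f)
  case 0
  have "patterns 0 = {[]}" by (auto simp: patterns_def)
  then show ?case by simp
next
  case (Suc L)
  have "(\<Sum>x\<in>patterns (Suc L). f (wt x)) =
      (\<Sum>x\<in>patterns L. f (Suc (wt x))) + (\<Sum>x\<in>patterns L. f (wt x))"
    unfolding patterns_Suc by (subst sum.union_disjoint) (auto simp: sum.reindex inj_on_def)
  also have "\<dots> = (\<Sum>k\<le>L. of_nat (L choose k) * f (Suc k)) +
      (\<Sum>k\<le>L. of_nat (L choose k) * f k)"
    using Suc[of "\<lambda>k. f (Suc k)"] Suc[of f] by simp
  also have "\<dots> = (\<Sum>k\<le>Suc L. of_nat (Suc L choose k) * f k)"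
  proof -
    have "(\<Sum>k\<le>L. of_nat (L choose k) * f k) = (\<Sum>k\<le>Suc L. of_nat (L choose k) * f k)"
      by (simp add: binomial_eq_0)
    also have "\<dots> = f 0 + (\<Sum>k\<le>L. of_nat (L choose Suc k) * f (Suc k))"
      by (simp only: sum.atMost_Suc_shift) simp
    finally have lower:
      "(\<Sum>k\<le>L. of_nat (L choose k) * f k) = f 0 + (\<Sum>k\<le>L. of_nat (L choose Suc k) * f (Suc k))" .
    have upper: "(\<Sum>k\<le>Suc L. of_nat (Suc L choose k) * f k)
        = f 0 + (\<Sum>k\<le>L. of_nat (L choose k) * f (Suc k)) +
          (\<Sum>k\<le>L. of_nat (L choose Suc k) * f (Suc k))"
      by (simp only: sum.atMost_Suc_shift) (simp add: sum.distrib distrib_right)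
    show ?thesis
      unfolding lower upper by (simp only: add_ac)
  qed
  finally show ?case .
qed

lemma sum_patterns_binomial:
  fixes a b :: real
  shows "(\<Sum>x\<in>patterns L. a ^ wt x * b ^ (L - wt x)) = (a + b) ^ L"
  by (simp add: sum_patterns_wt[of "\<lambda>k. a ^ k * b ^ (L - k)"] binomial_ring atLeast0AtMost mult_ac)

lemma sum_alternating_nonzero_patterns:
  assumes "L > 0"
  shows "(\<Sum>x\<in>patterns L - {replicate L False}. (-1::real) ^ (wt x + 1)) = 1"
proof -
  have "(\<Sum>x\<in>patterns L. (-1::real) ^ wt x) = 0"
    using choose_alternating_sum[OF assms, where 'a=real]
    by (simp add: sum_patterns_wt[of "\<lambda>k. (-1) ^ k"] mult.commute)
  then have "(\<Sum>x\<in>patterns L. (-1::real) ^ (wt x + 1)) = 0"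
    by (simp add: sum_negf)
  then show ?thesis
    by (simp add: sum.remove[of "patterns L" "replicate L False"])
qed

lemma alternating_binomial_sum_affine_prefix:
  fixes f :: "nat \<Rightarrow> real"
  assumes L: "L \<ge> 2" and f: "\<And>k. k \<le> L - 2 \<Longrightarrow> f k = a + c * real k"
  shows "(\<Sum>k\<le>L. real (L choose k) * ((-1) ^ (k + 1) * f k)) =
    (-1) ^ L * (real L * (f (L - 1) - (a + c * real (L - 1))) - (f L - (a + c * real L)))"
proof -
  obtain m where L_eq: "L = Suc (Suc m)"
    using L by (metis add_2_eq_Suc le_Suc_ex)
  define d where "d k = f k - (a + c * real k)" for k
  have "(\<Sum>k\<le>L. real (L choose k) * ((-1) ^ (k + 1) * (a + c * real k))) =
      - a * (\<Sum>k\<le>L. (-1) ^ k * real (L choose k)) - c * (\<Sum>k\<le>L. (-1) ^ k * real k * real (L choose k))"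
    by (simp add: sum_distrib_left sum_subtractf algebra_simps)
  also have "\<dots> = 0"
    using L by (simp add: choose_alternating_sum choose_alternating_linear_sum)
  finally have affine: "(\<Sum>k\<le>L. real (L choose k) * ((-1) ^ (k + 1) * (a + c * real k))) = 0" .
  have "(\<Sum>k\<le>m. real (L choose k) * ((-1) ^ (k + 1) * d k)) = 0"
    using f by (simp add: d_def L_eq)
  then have "(\<Sum>k\<le>L. real (L choose k) * ((-1) ^ (k + 1) * d k)) =
      (-1) ^ L * (real L * d (L - 1) - d L)"
    by (simp add: L_eq algebra_simps)
  moreover have "(\<Sum>k\<le>L. real (L choose k) * ((-1) ^ (k + 1) * f k)) =
      (\<Sum>k\<le>L. real (L choose k) * ((-1) ^ (k + 1) * (a + c * real k))) +
      (\<Sum>k\<le>L. real (L choose k) * ((-1) ^ (k + 1) * d k))"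
    by (simp add: d_def algebra_simps flip: sum.distrib)
  ultimately show ?thesis
    using affine by (simp add: d_def)
qed

lemma gamma_eq:
  "gamma L P = (\<Sum>x\<in>patterns L - {replicate L False}. (-1) ^ (wt x + 1) * ln (pmf P x))
     - ln (pmf P (replicate L False))"
  unfolding gamma_def by (simp add: sum.remove[of "patterns L" "replicate L False"])

section \<open>Adding the unobserved pattern\<close>

definition zero_inflated :: "real \<Rightarrow> 'a pmf \<Rightarrow> 'a \<Rightarrow> 'a pmf" where
  "zero_inflated s Q z = do {c \<leftarrow> bernoulli_pmf s; if c then Q else return_pmf z}"

lemma pmf_zero_inflated:
  assumes "0 \<le> s" "s \<le> 1" "z \<notin> set_pmf Q"
  shows "pmf (zero_inflated s Q z) x = (if x = z then 1 - s else s * pmf Q x)"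
  using assms by (auto simp: zero_inflated_def pmf_bind pmf_eq_0_set_pmf indicator_def)

lemma pmf_cond_pmf_Compl_singleton:
  assumes "pmf P z < 1"
  shows "pmf (cond_pmf P (- {z})) x = (if x = z then 0 else pmf P x / (1 - pmf P z))"
proof -
  have "measure_pmf.prob P (- {z}) = 1 - pmf P z"
    using measure_pmf.prob_compl[of "{z}" P] by (simp add: Compl_eq_Diff_UNIV measure_pmf_single)
  moreover have "set_pmf P \<inter> - {z} \<noteq> {}"
  proof
    assume "set_pmf P \<inter> - {z} = {}"
    then have "P = return_pmf z"
      by (auto simp flip: set_pmf_subset_singleton)
    with assms show False
      by simp
  qed
  ultimately show ?thesis
    by (simp add: pmf_cond)
qed

lemma pmf_less_1:
  assumes "pmf P y > 0" "y \<noteq> x"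
  shows "pmf P x < 1"
proof -
  have "pmf P x + pmf P y = measure_pmf.prob P {x, y}"
    using assms(2) by (simp add: measure_pmf.finite_measure_eq_sum_singleton measure_pmf_single)
  also have "\<dots> \<le> 1"
    by simp
  finally show ?thesis
    using assms(1) by linarith
qed

lemma zero_inflated_decomposition:
  fixes P :: "bool list pmf" and L :: nat
  defines "z \<equiv> replicate L False"
  defines "Q \<equiv> cond_pmf P (- {z})"
  assumes L: "L > 0" and supp: "set_pmf P \<subseteq> patterns L"
    and pos: "\<And>x. x \<in> patterns L \<Longrightarrow> pmf P x > 0"
  shows "zero_inflated (1 - pmf P z) Q z = P" "0 < pmf P z" "pmf P z < 1"
    "z \<notin> set_pmf Q" "set_pmf Q \<subseteq> patterns L" "\<And>x. x \<in> patterns L - {z} \<Longrightarrow> pmf Q x > 0"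
proof -
  show q: "0 < pmf P z" "pmf P z < 1"
    using pos[of z] pmf_less_1[OF pos[of "replicate L True"], of z] L by (simp_all add: z_def)
  have pmf_Q: "pmf Q x = (if x = z then 0 else pmf P x / (1 - pmf P z))" for x
    using q by (simp add: Q_def pmf_cond_pmf_Compl_singleton)
  show "zero_inflated (1 - pmf P z) Q z = P"
    using q by (intro pmf_eqI) (auto simp: pmf_zero_inflated pmf_Q set_pmf_eq)
  show "z \<notin> set_pmf Q" "set_pmf Q \<subseteq> patterns L"
    using supp by (auto simp: set_pmf_eq pmf_Q split: if_splits)
  show "pmf Q x > 0" if "x \<in> patterns L - {z}" for x
    using that pos q by (simp add: pmf_Q)
qed

lemma gamma_zero_inflated:
  fixes Q :: "bool list pmf" and L :: nat
  defines "z \<equiv> replicate L False"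
  assumes L: "L > 0" and s: "0 < s" "s < 1" and z: "z \<notin> set_pmf Q"
    and pos: "\<And>x. x \<in> patterns L - {z} \<Longrightarrow> pmf Q x > 0"
  shows "gamma L (zero_inflated s Q z) =
    ln (s / (1 - s)) + (\<Sum>x\<in>patterns L - {z}. (-1) ^ (wt x + 1) * ln (pmf Q x))"
proof -
  have "(\<Sum>x\<in>patterns L - {z}. (-1) ^ (wt x + 1) * ln (pmf (zero_inflated s Q z) x)) =
      (\<Sum>x\<in>patterns L - {z}. (-1) ^ (wt x + 1) * ln s + (-1) ^ (wt x + 1) * ln (pmf Q x))"
  proof (rule sum.cong[OF refl])
    fix x
    assume x: "x \<in> patterns L - {z}"
    then have "pmf Q x > 0"
      by (rule pos)
    then show "(-1) ^ (wt x + 1) * ln (pmf (zero_inflated s Q z) x) =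
        (-1) ^ (wt x + 1) * ln s + (-1) ^ (wt x + 1) * ln (pmf Q x)"
      using x s z by (simp add: pmf_zero_inflated ln_mult distrib_left)
  qed
  also have "\<dots> = (\<Sum>x\<in>patterns L - {z}. (-1) ^ (wt x + 1)) * ln s +
      (\<Sum>x\<in>patterns L - {z}. (-1) ^ (wt x + 1) * ln (pmf Q x))"
    by (simp only: sum.distrib sum_distrib_right)
  also have "\<dots> = ln s + (\<Sum>x\<in>patterns L - {z}. (-1) ^ (wt x + 1) * ln (pmf Q x))"
    unfolding z_def sum_alternating_nonzero_patterns[OF L] by simp
  finally show ?thesis
    using s z by (simp add: gamma_eq z_def pmf_zero_inflated ln_div)
qed

lemma in_model_zero_inflated:
  fixes Q :: "bool list pmf" and L :: nat
  defines "z \<equiv> replicate L False"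
  defines "G \<equiv> (\<Sum>x\<in>patterns L - {z}. (-1) ^ (wt x + 1) * ln (pmf Q x))"
  assumes L: "L > 0" and z: "z \<notin> set_pmf Q" and supp: "set_pmf Q \<subseteq> patterns L"
    and pos: "\<And>x. x \<in> patterns L - {z} \<Longrightarrow> pmf Q x > 0"
  shows "in_model L (zero_inflated (1 / (1 + exp G)) Q z)"
proof -
  define s where "s = 1 / (1 + exp G)"
  have denom: "0 < 1 + exp G"
    using exp_gt_zero[of G] by linarith
  then have s: "0 < s" "s < 1"
    by (simp_all add: s_def divide_less_eq)
  have "in_model L (zero_inflated s Q z)"
    unfolding in_model_def
  proof (intro conjI ballI)
    show "set_pmf (zero_inflated s Q z) \<subseteq> patterns L"
      using supp by (auto simp: zero_inflated_def z_def split: if_splits)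
    show "pmf (zero_inflated s Q z) x > 0" if "x \<in> patterns L" for x
      using that s z pos by (auto simp: pmf_zero_inflated)
    have "s / (1 - s) = exp (- G)"
      using denom by (simp add: s_def field_simps exp_minus)
    then show "gamma L (zero_inflated s Q z) = 0"
      using gamma_zero_inflated[OF L s z[unfolded z_def]] pos by (simp add: G_def z_def)
  qed
  then show ?thesis
    by (simp add: s_def)
qed

section \<open>I.i.d. sequences\<close>

definition iid_seq :: "'a pmf \<Rightarrow> (nat \<Rightarrow> 'a) measure" where
  "iid_seq R = PiM UNIV (\<lambda>_. measure_pmf R)"

lemma iid_eq_iid_seq: "iid P = iid_seq P"
  by (simp add: iid_def iid_seq_def)

lemma space_iid_seq [simp]: "space (iid_seq R) = UNIV"
  by (simp add: iid_seq_def space_PiM)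

lemma prob_space_iid_seq: "prob_space (iid_seq R)"
  unfolding iid_seq_def by (intro prob_space_PiM prob_space_measure_pmf)

lemma measurable_iid_seq_component [measurable]:
  "(\<lambda>Z. Z i) \<in> measurable (iid_seq R) (measure_pmf R)"
  unfolding iid_seq_def by (rule measurable_component_singleton) simp

lemma sets_iid_seq_box [measurable]: "{Z. \<forall>i<n. Z i \<in> A i} \<in> sets (iid_seq R)"
proof -
  have [measurable]: "Measurable.pred (iid_seq R) (\<lambda>Z. Z i \<in> A i)" for i
    using measurable_sets[OF measurable_iid_seq_component, of "A i"] by (simp add: pred_def vimage_def)
  have "Measurable.pred (iid_seq R) (\<lambda>Z. \<forall>i\<in>{..<n}. Z i \<in> A i)"
    by measurable
  moreover have "{Z. \<forall>i<n. Z i \<in> A i} = {Z \<in> space (iid_seq R). \<forall>i\<in>{..<n}. Z i \<in> A i}"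
    by auto
  ultimately show ?thesis
    by (simp add: pred_def)
qed

lemma emeasure_iid_seq_box:
  "emeasure (iid_seq R) {Z. \<forall>i<n. Z i \<in> A i} = (\<Prod>i<n. emeasure (measure_pmf R) (A i))"
proof -
  interpret product_prob_space "\<lambda>_::nat. measure_pmf R" UNIV
    by unfold_locales
  have "{Z. \<forall>i<n. Z i \<in> A i} = {Z \<in> space (iid_seq R). \<forall>i\<in>{..<n}. Z i \<in> A i}"
    by auto
  then show ?thesis
    using emeasure_PiM_Collect[of "{..<n}" A] by (simp add: iid_seq_def)
qed

lemma measure_replicate_pmf_box:
  "measure_pmf.prob (replicate_pmf n (R :: 'a::countable pmf)) {xs. length xs = n \<and> (\<forall>i<n. xs ! i \<in> A i)} =
   (\<Prod>i<n. measure_pmf.prob R (A i))"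
proof (induction n arbitrary: A)
  case 0
  then show ?case by (simp add: measure_return indicator_def)
next
  case (Suc n)
  have split: "replicate_pmf (Suc n) R = map_pmf (\<lambda>(x, xs). x # xs) (pair_pmf R (replicate_pmf n R))"
    by (simp add: pair_pmf_def map_pmf_def bind_assoc_pmf bind_return_pmf)
  have preimage: "(\<lambda>(x, xs). x # xs) -` {xs. length xs = Suc n \<and> (\<forall>i<Suc n. xs ! i \<in> A i)} =
      A 0 \<times> {xs. length xs = n \<and> (\<forall>i<n. xs ! i \<in> A (Suc i))}"
    by (auto simp: All_less_Suc2 length_Suc_conv)
  show ?case
    unfolding split measure_map_pmf preimage
    by (subst measure_pmf_prob_product) (auto simp: Suc prod.lessThan_Suc_shift simp del: prod.lessThan_Suc)
qed

lemma map_upt_eq_iff: "map Z [0..<n] = xs \<longleftrightarrow> length xs = n \<and> (\<forall>i<n. Z i = xs ! i)"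
  by (auto simp: list_eq_iff_nth_eq)

lemma measurable_prefix:
  "(\<lambda>Z. map Z [0..<n]) \<in> measurable (iid_seq (R :: 'a::countable pmf)) (count_space UNIV)"
proof (subst measurable_count_space_eq2_countable, safe)
  fix xs :: "'a list"
  have "(\<lambda>Z. map Z [0..<n]) -` {xs} =
      (if length xs = n then {Z. \<forall>i<n. Z i \<in> {xs ! i}} else {})"
    by (auto simp: map_upt_eq_iff)
  then show "(\<lambda>Z. map Z [0..<n]) -` {xs} \<inter> space (iid_seq R) \<in> sets (iid_seq R)"
    using sets_iid_seq_box[where A = "\<lambda>i. {xs ! i}"] by simp
qed simp

lemma measurable_prefix_fun:
  "(\<lambda>Z. f (map Z [0..<n])) \<in> measurable (iid_seq (R :: 'a::countable pmf)) M"
  if "f \<in> UNIV \<rightarrow> space M"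
  by (rule measurable_compose[OF measurable_prefix]) (simp add: measurable_count_space_eq1 that)

lemma distr_iid_seq_prefix:
  "distr (iid_seq R) (count_space UNIV) (\<lambda>Z. map Z [0..<n]) =
   measure_pmf (replicate_pmf n (R :: 'a::countable pmf))"
proof (rule measure_eqI_countable[where A = UNIV])
  fix xs :: "'a list"
  have "emeasure (distr (iid_seq R) (count_space UNIV) (\<lambda>Z. map Z [0..<n])) {xs} =
      emeasure (iid_seq R) ((\<lambda>Z. map Z [0..<n]) -` {xs})"
    by (simp add: emeasure_distr[OF measurable_prefix])
  also have "\<dots> = emeasure (measure_pmf (replicate_pmf n R)) {xs}"
  proof (cases "length xs = n")
    case True
    then have "(\<lambda>Z. map Z [0..<n]) -` {xs} = {Z. \<forall>i<n. Z i \<in> {xs ! i}}"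
      and "{xs} = {ys. length ys = n \<and> (\<forall>i<n. ys ! i \<in> {xs ! i})}"
      by (auto simp: map_upt_eq_iff intro: nth_equalityI)
    then show ?thesis
      using emeasure_iid_seq_box[where A = "\<lambda>i. {xs ! i}"]
        measure_replicate_pmf_box[where A = "\<lambda>i. {xs ! i}"]
      by (simp add: measure_pmf.emeasure_eq_measure prod_ennreal)
  next
    case False
    then have "(\<lambda>Z. map Z [0..<n]) -` {xs} = {}" and "xs \<notin> set_pmf (replicate_pmf n R)"
      by (auto simp: map_upt_eq_iff set_replicate_pmf)
    then show ?thesis
      by (simp add: emeasure_pmf_single pmf_eq_0_set_pmf)
  qed
  finally show "emeasure (distr (iid_seq R) (count_space UNIV) (\<lambda>Z. map Z [0..<n])) {xs} =
      emeasure (measure_pmf (replicate_pmf n R)) {xs}" .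
qed auto

lemma iid_seq_eqI:
  fixes P :: "'a::countable pmf"
  assumes sets: "sets M = sets (iid_seq P)"
    and prefix: "\<And>n. distr M (count_space UNIV) (\<lambda>Z. map Z [0..<n]) = measure_pmf (replicate_pmf n P)"
  shows "M = iid_seq P"
  unfolding iid_seq_def
proof (rule product_prob_space.PiM_eq)
  show "product_prob_space (\<lambda>_::nat. measure_pmf P)"
    by unfold_locales
  show "sets M = sets (Pi\<^sub>M UNIV (\<lambda>_. measure_pmf P))"
    using sets by (simp add: iid_seq_def)
next
  fix J :: "nat set" and F :: "nat \<Rightarrow> 'a set"
  assume J: "finite J"
  define n where "n = (if J = {} then 0 else Suc (Max J))"
  have Jn: "J \<subseteq> {..<n}"
    using J by (auto simp: n_def less_Suc_eq_le)
  define A where "A i = (if i \<in> J then F i else UNIV)" for i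
  define B where "B = {xs. length xs = n \<and> (\<forall>i<n. xs ! i \<in> A i)}"
  have space: "space M = UNIV"
    using sets_eq_imp_space_eq[OF sets] by simp
  have "prod_emb UNIV (\<lambda>_. measure_pmf P) J (Pi\<^sub>E J F) = (\<lambda>Z. map Z [0..<n]) -` B \<inter> space M"
    using Jn by (auto simp: prod_emb_def space A_def B_def space_PiM PiE_iff subset_eq)
  then have "emeasure M (prod_emb UNIV (\<lambda>_. measure_pmf P) J (Pi\<^sub>E J F)) =
      emeasure (distr M (count_space UNIV) (\<lambda>Z. map Z [0..<n])) B"
    using measurable_prefix[of n P] sets
    by (simp add: emeasure_distr cong: measurable_cong_sets)
  also have "\<dots> = ennreal (\<Prod>i<n. measure_pmf.prob P (A i))"
    by (simp add: prefix B_def measure_pmf.emeasure_eq_measure measure_replicate_pmf_box)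
  also have "(\<Prod>i<n. measure_pmf.prob P (A i)) = (\<Prod>i\<in>J. measure_pmf.prob P (F i))"
    using Jn by (intro prod.mono_neutral_cong_right) (auto simp: A_def)
  finally show "emeasure M (prod_emb UNIV (\<lambda>_. measure_pmf P) J (Pi\<^sub>E J F)) =
      (\<Prod>j\<in>J. emeasure (measure_pmf P) (F j))"
    by (simp add: measure_pmf.emeasure_eq_measure prod_ennreal)
qed

lemma map_pmf_map_replicate_pmf: "map_pmf (map f) (replicate_pmf n R) = replicate_pmf n (map_pmf f R)"
proof (induction n)
  case (Suc n)
  then show ?case
    by (simp add: map_bind_pmf bind_map_pmf flip: Suc.IH)
qed simp

lemma replicate_pmf_pair_unzip:
  "map_pmf (\<lambda>ps. (map fst ps, map snd ps)) (replicate_pmf n (pair_pmf A B)) =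
   pair_pmf (replicate_pmf n A) (replicate_pmf n B)"
proof (induction n)
  case 0
  then show ?case by (simp add: pair_return_pmf1)
next
  case (Suc n)
  have "map_pmf (\<lambda>ps. (map fst ps, map snd ps)) (replicate_pmf (Suc n) (pair_pmf A B)) =
      do {p \<leftarrow> pair_pmf A B; q \<leftarrow> pair_pmf (replicate_pmf n A) (replicate_pmf n B);
          return_pmf (fst p # fst q, snd p # snd q)}"
    by (simp add: map_bind_pmf bind_map_pmf flip: Suc.IH)
  also have "\<dots> = pair_pmf (replicate_pmf (Suc n) A) (replicate_pmf (Suc n) B)"
    unfolding pair_pmf_def by (simp add: bind_assoc_pmf bind_return_pmf bind_commute_pmf[of B])
  finally show ?case .
qed

section \<open>Interleaving coin flips with observed patterns\<close>

fun interleave :: "'a \<Rightarrow> bool list \<Rightarrow> 'a list \<Rightarrow> 'a list" where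
  "interleave z [] vs = []"
| "interleave z (c # cs) vs =
     (if c then hd vs # interleave z cs (tl vs) else z # interleave z cs vs)"

lemma length_interleave [simp]: "length (interleave z cs vs) = length cs"
  by (induction cs arbitrary: vs) auto

lemma nth_interleave:
  assumes "i < length cs" "length cs \<le> length vs"
  shows "interleave z cs vs ! i = (if cs ! i then vs ! length (filter id (take i cs)) else z)"
  using assms
proof (induction cs arbitrary: i vs)
  case Nil
  then show ?case by simp
next
  case (Cons c cs)
  then obtain v vs' where vs: "vs = v # vs'"
    by (cases vs) auto
  show ?case
  proof (cases i)
    case 0
    then show ?thesis by (simp add: vs)
  next
    case (Suc j)
    then show ?thesis
      using Cons.IH[of j vs'] Cons.IH[of j vs] Cons.prems by (auto simp: vs id_def)
  qed
qed

definition interleave_pmf :: "real \<Rightarrow> 'a pmf \<Rightarrow> 'a \<Rightarrow> nat \<Rightarrow> nat \<Rightarrow> 'a list pmf" where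
  "interleave_pmf s Q z n m =
     do {cs \<leftarrow> replicate_pmf n (bernoulli_pmf s); vs \<leftarrow> replicate_pmf m Q; return_pmf (interleave z cs vs)}"

lemma interleave_pmf_Suc:
  "interleave_pmf s Q z (Suc n) (Suc m) =
     do {c \<leftarrow> bernoulli_pmf s; x \<leftarrow> (if c then Q else return_pmf z);
         map_pmf (Cons x) (interleave_pmf s Q z n (if c then m else Suc m))}"
proof -
  have "interleave_pmf s Q z (Suc n) (Suc m) =
      do {c \<leftarrow> bernoulli_pmf s; cs \<leftarrow> replicate_pmf n (bernoulli_pmf s); v \<leftarrow> Q;
          vs \<leftarrow> replicate_pmf m Q; return_pmf (interleave z (c # cs) (v # vs))}"
    by (simp add: interleave_pmf_def bind_assoc_pmf bind_return_pmf del: interleave.simps)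
  also have "\<dots> = do {c \<leftarrow> bernoulli_pmf s; x \<leftarrow> (if c then Q else return_pmf z);
         map_pmf (Cons x) (interleave_pmf s Q z n (if c then m else Suc m))}"
  proof (intro bind_pmf_cong refl)
    fix c :: bool
    show "do {cs \<leftarrow> replicate_pmf n (bernoulli_pmf s); v \<leftarrow> Q; vs \<leftarrow> replicate_pmf m Q;
          return_pmf (interleave z (c # cs) (v # vs))} =
        do {x \<leftarrow> (if c then Q else return_pmf z);
          map_pmf (Cons x) (interleave_pmf s Q z n (if c then m else Suc m))}"
    proof (cases c)
      case True
      then show ?thesis
        by (simp add: interleave_pmf_def map_bind_pmf) (subst bind_commute_pmf, simp)
    next
      case False
      then show ?thesis
        by (simp add: interleave_pmf_def map_bind_pmf bind_assoc_pmf bind_return_pmf)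
    qed
  qed
  finally show ?thesis .
qed

lemma interleave_pmf_eq_replicate_pmf:
  assumes "n \<le> m"
  shows "interleave_pmf s Q z n m = replicate_pmf n (zero_inflated s Q z)"
  using assms
proof (induction n arbitrary: m)
  case 0
  then show ?case
    by (simp add: interleave_pmf_def bind_return_pmf bind_pmf_const)
next
  case (Suc n)
  then obtain m' where m: "m = Suc m'" and n: "n \<le> m'"
    by (cases m) auto
  have "interleave_pmf s Q z n (if c then m' else Suc m') = replicate_pmf n (zero_inflated s Q z)" for c
    using Suc.IH n by simp
  then show ?case
    by (simp add: m interleave_pmf_Suc zero_inflated_def bind_assoc_pmf map_pmf_def)
qed

definition hits :: "('r \<Rightarrow> bool) \<Rightarrow> (nat \<Rightarrow> 'r) \<Rightarrow> nat \<Rightarrow> nat" where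
  "hits b Z n = length (filter b (map Z [0..<n]))"

lemma hits_0 [simp]: "hits b Z 0 = 0"
  by (simp add: hits_def)

lemma hits_Suc: "hits b Z (Suc n) = hits b Z n + (if b (Z n) then 1 else 0)"
  by (simp add: hits_def)

lemma hits_le: "hits b Z n \<le> n"
  unfolding hits_def by (metis length_filter_le length_map length_upt minus_nat.diff_0)

(* The value revealed by the j-th successful coin is y (Z j), wherever that coin occurs, so two
   coin functions applied to the same Z reveal the same values, only at different times. *)
definition interleave_seq ::
  "('r \<Rightarrow> bool) \<Rightarrow> ('r \<Rightarrow> 'a) \<Rightarrow> 'a \<Rightarrow> (nat \<Rightarrow> 'r) \<Rightarrow> nat \<Rightarrow> 'a" where
  "interleave_seq b y z Z i = (if b (Z i) then y (Z (hits b Z i)) else z)"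

lemma prefix_interleave_seq:
  "map (interleave_seq b y z Z) [0..<n] = interleave z (map b (map Z [0..<n])) (map y (map Z [0..<n]))"
proof (rule nth_equalityI)
  fix i
  assume "i < length (map (interleave_seq b y z Z) [0..<n])"
  then have i: "i < n"
    by simp
  have "length (filter id (take i (map b (map Z [0..<n])))) = hits b Z i"
    using i by (simp add: hits_def take_map filter_map comp_def id_def)
  moreover have "hits b Z i < n"
    using hits_le[of b Z i] i by linarith
  ultimately show "map (interleave_seq b y z Z) [0..<n] ! i =
      interleave z (map b (map Z [0..<n])) (map y (map Z [0..<n])) ! i"
    using i by (simp add: nth_interleave interleave_seq_def)
qed simp

lemma measurable_interleave_seq:
  "interleave_seq b y z \<in> measurable (iid_seq (R :: 'r::countable pmf)) (iid_seq P)"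
proof -
  have "(\<lambda>Z. interleave_seq b y z Z i) \<in> measurable (iid_seq R) (measure_pmf P)" for i
  proof -
    have "interleave_seq b y z Z i = map (interleave_seq b y z Z) [0..<Suc i] ! i" for Z
      by (simp add: nth_append)
    then have "interleave_seq b y z Z i =
        interleave z (map b (map Z [0..<Suc i])) (map y (map Z [0..<Suc i])) ! i" for Z
      by (simp only: prefix_interleave_seq)
    then show ?thesis
      using measurable_prefix_fun[where f = "\<lambda>zs. interleave z (map b zs) (map y zs) ! i"
          and n = "Suc i" and M = "measure_pmf P" and R = R]
      by simp
  qed
  then show ?thesis
    unfolding iid_seq_def by (intro measurable_PiM_single') (auto simp: iid_seq_def)
qed

lemma distr_interleave_seq:
  fixes R :: "'r::countable pmf" and Q :: "'a::countable pmf"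
  assumes R: "map_pmf (\<lambda>r. (b r, y r)) R = pair_pmf (bernoulli_pmf s) Q"
  shows "distr (iid_seq R) (iid_seq (zero_inflated s Q z)) (interleave_seq b y z) =
    iid_seq (zero_inflated s Q z)"
proof (rule iid_seq_eqI)
  fix n
  let ?f = "\<lambda>zs. interleave z (map b zs) (map y zs)"
  have "map_pmf ?f (replicate_pmf n R) = map_pmf (\<lambda>(cs, vs). interleave z cs vs)
      (map_pmf (\<lambda>ps. (map fst ps, map snd ps)) (map_pmf (map (\<lambda>r. (b r, y r))) (replicate_pmf n R)))"
    by (simp add: map_pmf_comp comp_def)
  also have "\<dots> = map_pmf (\<lambda>(cs, vs). interleave z cs vs)
      (pair_pmf (replicate_pmf n (bernoulli_pmf s)) (replicate_pmf n Q))"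
    by (simp only: map_pmf_map_replicate_pmf R replicate_pmf_pair_unzip)
  also have "\<dots> = interleave_pmf s Q z n n"
    by (simp add: interleave_pmf_def pair_pmf_def map_bind_pmf)
  also have "\<dots> = replicate_pmf n (zero_inflated s Q z)"
    by (simp add: interleave_pmf_eq_replicate_pmf)
  finally have law: "map_pmf ?f (replicate_pmf n R) = replicate_pmf n (zero_inflated s Q z)" .
  have "distr (distr (iid_seq R) (iid_seq (zero_inflated s Q z)) (interleave_seq b y z))
      (count_space UNIV) (\<lambda>Z. map Z [0..<n]) =
      distr (iid_seq R) (count_space UNIV) (\<lambda>Z. map (interleave_seq b y z Z) [0..<n])"
    by (simp add: distr_distr measurable_prefix measurable_interleave_seq comp_def)
  also have "\<dots> = distr (distr (iid_seq R) (count_space UNIV) (\<lambda>Z. map Z [0..<n])) (count_space UNIV) ?f"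
    by (simp add: distr_distr measurable_prefix comp_def prefix_interleave_seq)
  also have "\<dots> = measure_pmf (replicate_pmf n (zero_inflated s Q z))"
    by (simp add: distr_iid_seq_prefix law flip: map_pmf_rep_eq)
  finally show "distr (distr (iid_seq R) (iid_seq (zero_inflated s Q z)) (interleave_seq b y z))
      (count_space UNIV) (\<lambda>Z. map Z [0..<n]) = measure_pmf (replicate_pmf n (zero_inflated s Q z))" .
qed simp

lemma card_less_Suc_Collect:
  "card {i. i < Suc N \<and> P i} = card {i. i < N \<and> P i} + (if P N then 1 else 0)"
proof -
  have "{i. i < Suc N \<and> P i} = (if P N then insert N {i. i < N \<and> P i} else {i. i < N \<and> P i})"
    by (auto simp: less_Suc_eq)
  then show ?thesis
    by simp
qed

lemma counts_interleave_seq: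
  "counts L N (interleave_seq b y (replicate L False) Z) = counts L (hits b Z N) (\<lambda>j. y (Z j))"
proof
  fix x
  show "counts L N (interleave_seq b y (replicate L False) Z) x = counts L (hits b Z N) (\<lambda>j. y (Z j)) x"
  proof (cases "x \<in> patterns L \<and> x \<noteq> replicate L False")
    case True
    have "card {i. i < N \<and> interleave_seq b y (replicate L False) Z i = x} =
        card {j. j < hits b Z N \<and> y (Z j) = x}"
    proof (induction N)
      case (Suc N)
      have "interleave_seq b y (replicate L False) Z N = x \<longleftrightarrow> b (Z N) \<and> y (Z (hits b Z N)) = x"
        using True by (auto simp: interleave_seq_def)
      then show ?case
        using Suc by (simp add: card_less_Suc_Collect hits_Suc)
    qed simp
    then show ?thesis
      using True by (simp add: counts_def)
  qed (auto simp: counts_def)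
qed

section \<open>Strong law of large numbers for the coins\<close>

lemma pred_tendsto_real:
  fixes f :: "nat \<Rightarrow> 'a \<Rightarrow> real"
  assumes [measurable]: "\<And>N. f N \<in> borel_measurable M"
  shows "Measurable.pred M (\<lambda>\<omega>. (\<lambda>N. f N \<omega>) \<longlonglongrightarrow> c)"
proof -
  have "(\<lambda>N. f N \<omega>) \<longlonglongrightarrow> c \<longleftrightarrow>
      liminf (\<lambda>N. ereal (f N \<omega>)) = ereal c \<and> limsup (\<lambda>N. ereal (f N \<omega>)) = ereal c" for \<omega>
    by (simp flip: lim_ereal add: tendsto_iff_Liminf_eq_Limsup)
  then show ?thesis
    by simp
qed

lemma (in prob_space) AE_tendsto_of_summable_deviations:
  fixes X :: "nat \<Rightarrow> 'a \<Rightarrow> real"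
  assumes [measurable]: "\<And>N. X N \<in> borel_measurable M"
    and summable: "\<And>e. e > 0 \<Longrightarrow> summable (\<lambda>N. prob {\<omega> \<in> space M. e \<le> \<bar>X N \<omega> - c\<bar>})"
  shows "AE \<omega> in M. (\<lambda>N. X N \<omega>) \<longlonglongrightarrow> c"
proof -
  have "AE \<omega> in M. eventually (\<lambda>N. \<bar>X N \<omega> - c\<bar> < e) sequentially" if "e > 0" for e
  proof -
    have "AE \<omega> in M. eventually
        (\<lambda>N. \<omega> \<in> space M - {\<omega> \<in> space M. e \<le> \<bar>X N \<omega> - c\<bar>}) sequentially"
      using summable[OF that] by (intro borel_cantelli_AE1) (auto simp: emeasure_eq_measure)
    then show ?thesis
      by eventually_elim (auto simp: not_le elim: eventually_mono)
  qed
  then have "AE \<omega> in M. \<forall>m.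
      eventually (\<lambda>N. \<bar>X N \<omega> - c\<bar> < inverse (real (Suc m))) sequentially"
    by (simp add: AE_all_countable)
  then show ?thesis
  proof (rule AE_mp, intro AE_I2 impI tendstoI)
    fix \<omega> and e :: real
    assume close: "\<forall>m. eventually (\<lambda>N. \<bar>X N \<omega> - c\<bar> < inverse (real (Suc m))) sequentially"
      and "e > 0"
    then obtain m where m: "inverse (real (Suc m)) < e"
      using reals_Archimedean by blast
    from close have "eventually (\<lambda>N. \<bar>X N \<omega> - c\<bar> < inverse (real (Suc m))) sequentially"
      by blast
    then show "eventually (\<lambda>N. dist (X N \<omega>) c < e) sequentially"
      by eventually_elim (use m in \<open>simp add: dist_real_def\<close>)
  qed
qed

lemma measurable_hits:
  "(\<lambda>Z. hits b Z N) \<in> measurable (iid_seq (R :: 'r::countable pmf)) (count_space UNIV)"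
  unfolding hits_def
  using measurable_prefix_fun[where f = "\<lambda>zs. length (filter b zs)" and M = "count_space UNIV"]
  by simp

lemma distr_hits:
  fixes R :: "'r::countable pmf"
  assumes R: "map_pmf b R = bernoulli_pmf s" and s: "0 \<le> s" "s \<le> 1"
  shows "distr (iid_seq R) (count_space UNIV) (\<lambda>Z. hits b Z N) = measure_pmf (binomial_pmf N s)"
proof -
  have "binomial_pmf N s = map_pmf (length \<circ> filter id) (map_pmf (map b) (replicate_pmf N R))"
    using s by (simp add: binomial_pmf_altdef map_pmf_map_replicate_pmf R)
  then have "binomial_pmf N s = map_pmf (\<lambda>zs. length (filter b zs)) (replicate_pmf N R)"
    by (simp add: map_pmf_comp filter_map comp_def)
  moreover have "distr (iid_seq R) (count_space UNIV) (\<lambda>Z. hits b Z N) =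
      distr (distr (iid_seq R) (count_space UNIV) (\<lambda>Z. map Z [0..<N])) (count_space UNIV)
        (\<lambda>zs. length (filter b zs))"
    by (simp add: distr_distr measurable_prefix comp_def hits_def)
  ultimately show ?thesis
    by (simp add: distr_iid_seq_prefix map_pmf_rep_eq)
qed

lemma prob_hits_deviation:
  fixes R :: "'r::countable pmf"
  assumes R: "map_pmf b R = bernoulli_pmf s" and s: "0 \<le> s" "s \<le> 1" and N: "N > 0" and e: "e \<ge> 0"
  shows "measure (iid_seq R) {Z. e \<le> \<bar>real (hits b Z N) / real N - s\<bar>} \<le> 2 * exp (- 2 * real N * e\<^sup>2)"
proof -
  have "measure (iid_seq R) {Z. e \<le> \<bar>real (hits b Z N) / real N - s\<bar>} =
      measure (distr (iid_seq R) (count_space UNIV) (\<lambda>Z. hits b Z N)) {k. e \<le> \<bar>real k / real N - s\<bar>}"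
    by (subst measure_distr[OF measurable_hits]) (auto simp: vimage_def)
  also have "\<dots> = measure_pmf.prob (binomial_pmf N s) {k. e \<le> \<bar>real k / real N - s\<bar>}"
    by (simp add: distr_hits[OF R s])
  also have "\<dots> \<le> 2 * exp (- 2 * real N * e\<^sup>2)"
    using binomial_distribution.prob_abs_ge'[of s N e] s e N by (simp add: binomial_distribution_def)
  finally show ?thesis .
qed

lemma AE_hits_tendsto:
  fixes R :: "'r::countable pmf"
  assumes R: "map_pmf b R = bernoulli_pmf s" and s: "0 \<le> s" "s \<le> 1"
  shows "AE Z in iid_seq R. (\<lambda>N. real (hits b Z N) / real N) \<longlonglongrightarrow> s"
proof (rule prob_space.AE_tendsto_of_summable_deviations[OF prob_space_iid_seq])
  show "(\<lambda>Z. real (hits b Z N) / real N) \<in> borel_measurable (iid_seq R)" for N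
    using measurable_hits[of b N R] by measurable
  fix e :: real
  assume e: "e > 0"
  define r where "r = exp (- 2 * e\<^sup>2)"
  have bound: "measure (iid_seq R) {Z \<in> space (iid_seq R). e \<le> \<bar>real (hits b Z N) / real N - s\<bar>}
      \<le> 2 * r ^ N" for N
  proof (cases "N = 0")
    case True
    have "measure (iid_seq R) A \<le> 1" for A
      by (rule prob_space.prob_le_1[OF prob_space_iid_seq])
    moreover have "1 \<le> 2 * r ^ N"
      using True by simp
    ultimately show ?thesis
      by (rule order_trans)
  next
    case False
    then show ?thesis
      using prob_hits_deviation[OF R s, of N e] e
      by (simp add: r_def mult_ac flip: exp_of_nat_mult)
  qed
  have "summable (\<lambda>N. 2 * r ^ N)"
    using e by (simp add: r_def)
  then show "summable (\<lambda>N. measure (iid_seq R)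
      {Z \<in> space (iid_seq R). e \<le> \<bar>real (hits b Z N) / real N - s\<bar>})"
    by (rule summable_comparison_test') (use bound in simp)
qed

section \<open>Random time changes\<close>

lemma unit_steps_attain:
  fixes f :: "nat \<Rightarrow> nat"
  assumes "f 0 = 0" "\<And>N. f (Suc N) \<le> Suc (f N)" "k \<le> f N"
  shows "\<exists>N'. f N' = k"
  using assms(3)
proof (induction N)
  case (Suc N)
  show ?case
  proof (cases "k \<le> f N")
    case False
    then have "f (Suc N) = k"
      using Suc.prems assms(2)[of N] by linarith
    then show ?thesis by blast
  qed (use Suc.IH in blast)
qed (use assms(1) in auto)

lemma tendsto_of_tendsto_comp_unit_steps:
  fixes c :: "nat \<Rightarrow> nat" and g :: "nat \<Rightarrow> real"
  assumes "c 0 = 0" "\<And>N. c (Suc N) \<le> Suc (c N)" "\<And>N. c N \<le> N"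
    and "filterlim c at_top sequentially" and "(\<lambda>N. g (c N)) \<longlonglongrightarrow> l"
  shows "g \<longlonglongrightarrow> l"
proof -
  have "\<exists>N. c N = k" for k
  proof -
    obtain N where "k \<le> c N"
      using assms(4) by (auto simp: filterlim_at_top eventually_sequentially)
    then show ?thesis
      using unit_steps_attain[of c] assms(1,2) by blast
  qed
  then obtain \<tau> where \<tau>: "\<And>k. c (\<tau> k) = k"
    by metis
  have "filterlim \<tau> at_top sequentially"
    by (rule filterlim_at_top_mono[OF filterlim_ident]) (use \<tau> assms(3) in \<open>metis always_eventually\<close>)
  then have "(\<lambda>k. g (c (\<tau> k))) \<longlonglongrightarrow> l"
    by (rule filterlim_compose[OF assms(5)])
  then show ?thesis
    by (simp add: \<tau>)
qed

lemma filterlim_at_top_of_ratio: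
  fixes c :: "nat \<Rightarrow> nat"
  assumes "(\<lambda>N. real (c N) / real N) \<longlonglongrightarrow> s" "s > 0"
  shows "filterlim c at_top sequentially"
proof -
  have "filterlim (\<lambda>N. real (c N) / real N * real N) at_top sequentially"
    by (rule filterlim_tendsto_pos_mult_at_top[OF assms filterlim_real_sequentially])
  moreover have "eventually (\<lambda>N. real (c N) / real N * real N = real (c N)) sequentially"
    using eventually_gt_at_top[of 0] by eventually_elim simp
  ultimately have "filterlim (\<lambda>N. real (c N)) at_top sequentially"
    using filterlim_cong by fastforce
  then show ?thesis
    by (simp add: filterlim_sequentially_iff_filterlim_real)
qed

lemma tendsto_ratio_time_change:
  fixes e :: "nat \<Rightarrow> real" and c c' :: "nat \<Rightarrow> nat"
  assumes c: "c 0 = 0" "\<And>N. c (Suc N) \<le> Suc (c N)" "\<And>N. c N \<le> N"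
    and e: "(\<lambda>N. e (c N) / real N) \<longlonglongrightarrow> 1"
    and rate: "(\<lambda>N. real (c N) / real N) \<longlonglongrightarrow> s" "s > 0"
    and rate': "(\<lambda>N. real (c' N) / real N) \<longlonglongrightarrow> s'" "s' > 0"
  shows "(\<lambda>N. e (c' N) / real N) \<longlonglongrightarrow> s' / s"
proof -
  have c_top: "filterlim c at_top sequentially" and c'_top: "filterlim c' at_top sequentially"
    using filterlim_at_top_of_ratio rate rate' by blast+
  have "(\<lambda>N. (e (c N) / real N) / (real (c N) / real N)) \<longlonglongrightarrow> 1 / s"
    using tendsto_divide[OF e rate(1)] rate(2) by simp
  moreover have "eventually (\<lambda>N. (e (c N) / real N) / (real (c N) / real N) = e (c N) / real (c N)) sequentially"
    using c_top[unfolded filterlim_at_top, rule_format, of 1] eventually_gt_at_top[of 0]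
    by eventually_elim simp
  ultimately have "(\<lambda>N. e (c N) / real (c N)) \<longlonglongrightarrow> 1 / s"
    by (rule Lim_transform_eventually)
  then have "(\<lambda>k. e k / real k) \<longlonglongrightarrow> 1 / s"
    by (rule tendsto_of_tendsto_comp_unit_steps[OF c c_top])
  then have "(\<lambda>N. e (c' N) / real (c' N) * (real (c' N) / real N)) \<longlonglongrightarrow> 1 / s * s'"
    by (intro tendsto_mult filterlim_compose[OF _ c'_top] rate'(1))
  moreover have "eventually (\<lambda>N. e (c' N) / real (c' N) * (real (c' N) / real N) = e (c' N) / real N) sequentially"
    using c'_top[unfolded filterlim_at_top, rule_format, of 1] eventually_gt_at_top[of 0]
    by eventually_elim simp
  ultimately show ?thesis
    by (simp add: Lim_transform_eventually)
qed

section \<open>Asymptotic bias of a consistent estimator\<close>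

lemma counts_prefix: "counts L N \<omega> = counts L N (\<lambda>j. map \<omega> [0..<N] ! j)"
proof -
  have "{i. i < N \<and> \<omega> i = x} = {i. i < N \<and> map \<omega> [0..<N] ! i = x}" for x
    by auto
  then show ?thesis
    unfolding counts_def by (simp only:)
qed

lemma measurable_est_counts:
  "(\<lambda>\<omega>. est (counts L N \<omega>) / real N) \<in> borel_measurable (iid_seq (P :: bool list pmf))"
  using measurable_prefix_fun[where f = "\<lambda>xs. est (counts L N (\<lambda>j. xs ! j)) / real N"
      and M = borel and n = N and R = P]
  by (simp flip: counts_prefix)

lemma tendsto_est_interleave_seq:
  fixes L :: nat and est :: "(bool list \<Rightarrow> nat) \<Rightarrow> real"
  defines "z \<equiv> replicate L False"
  assumes est: "(\<lambda>N. est (counts L N (interleave_seq b' y z Z)) / real N) \<longlonglongrightarrow> 1"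
    and rate': "(\<lambda>N. real (hits b' Z N) / real N) \<longlonglongrightarrow> s'"
    and rate: "(\<lambda>N. real (hits b Z N) / real N) \<longlonglongrightarrow> s"
    and pos: "s' > 0" "s > 0"
  shows "(\<lambda>N. est (counts L N (interleave_seq b y z Z)) / real N) \<longlonglongrightarrow> s / s'"
proof -
  have "(\<lambda>N. est (counts L (hits b Z N) (\<lambda>j. y (Z j))) / real N) \<longlonglongrightarrow> s / s'"
    using est rate rate' pos by (intro tendsto_ratio_time_change[where c = "hits b' Z"])
      (auto simp: hits_Suc hits_le z_def counts_interleave_seq)
  then show ?thesis
    by (simp add: z_def counts_interleave_seq)
qed

lemma pair_pmf_pair_marginals:
  "map_pmf (\<lambda>r. (fst (fst r), snd r)) (pair_pmf (pair_pmf A B) C) = pair_pmf A C"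
  "map_pmf (\<lambda>r. (snd (fst r), snd r)) (pair_pmf (pair_pmf A B) C) = pair_pmf B C"
proof -
  have "map_pmf (\<lambda>r. (fst (fst r), snd r)) (pair_pmf (pair_pmf A B) C) =
      map_pmf (apfst fst) (pair_pmf (pair_pmf A B) C)"
    by (intro map_pmf_cong) auto
  also have "\<dots> = pair_pmf A C"
    by (simp add: map_fst_pair_pmf flip: pair_map_pmf1)
  finally show "map_pmf (\<lambda>r. (fst (fst r), snd r)) (pair_pmf (pair_pmf A B) C) = pair_pmf A C" .
  have "map_pmf (\<lambda>r. (snd (fst r), snd r)) (pair_pmf (pair_pmf A B) C) =
      map_pmf (apfst snd) (pair_pmf (pair_pmf A B) C)"
    by (intro map_pmf_cong) auto
  also have "\<dots> = pair_pmf B C"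
    by (simp add: map_snd_pair_pmf flip: pair_map_pmf1)
  finally show "map_pmf (\<lambda>r. (snd (fst r), snd r)) (pair_pmf (pair_pmf A B) C) = pair_pmf B C" .
qed

theorem AE_tendsto_est_zero_inflated:
  fixes Q :: "bool list pmf" and est :: "(bool list \<Rightarrow> nat) \<Rightarrow> real"
  assumes s: "0 < s" "s \<le> 1" and s': "0 < s'" "s' \<le> 1"
    and cons: "AE \<omega> in iid_seq (zero_inflated s' Q (replicate L False)).
      (\<lambda>N. est (counts L N \<omega>) / real N) \<longlonglongrightarrow> 1"
  shows "AE \<omega> in iid_seq (zero_inflated s Q (replicate L False)).
      (\<lambda>N. est (counts L N \<omega>) / real N) \<longlonglongrightarrow> s / s'"
proof -
  define z where "z = replicate L False"
  define R where "R = pair_pmf (pair_pmf (bernoulli_pmf s) (bernoulli_pmf s')) Q"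
  define b where "b = (\<lambda>r :: (bool \<times> bool) \<times> bool list. fst (fst r))"
  define b' where "b' = (\<lambda>r :: (bool \<times> bool) \<times> bool list. snd (fst r))"
  have law: "map_pmf (\<lambda>r. (b r, snd r)) R = pair_pmf (bernoulli_pmf s) Q"
    and law': "map_pmf (\<lambda>r. (b' r, snd r)) R = pair_pmf (bernoulli_pmf s') Q"
    by (simp_all add: R_def b_def b'_def pair_pmf_pair_marginals)
  have coin: "map_pmf b R = bernoulli_pmf s" and coin': "map_pmf b' R = bernoulli_pmf s'"
    using arg_cong[OF law, of "map_pmf fst"] arg_cong[OF law', of "map_pmf fst"]
    by (simp_all add: map_pmf_comp map_fst_pair_pmf)
  let ?\<Phi> = "interleave_seq b snd z" and ?\<Phi>' = "interleave_seq b' snd z"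
  have D: "distr (iid_seq R) (iid_seq (zero_inflated s Q z)) ?\<Phi> = iid_seq (zero_inflated s Q z)"
    and D': "distr (iid_seq R) (iid_seq (zero_inflated s' Q z)) ?\<Phi>' = iid_seq (zero_inflated s' Q z)"
    by (intro distr_interleave_seq law law')+
  from cons[folded z_def] have "AE \<omega> in distr (iid_seq R) (iid_seq (zero_inflated s' Q z)) ?\<Phi>'.
      (\<lambda>N. est (counts L N \<omega>) / real N) \<longlonglongrightarrow> 1"
    by (simp only: D')
  then have "AE Z in iid_seq R. (\<lambda>N. est (counts L N (?\<Phi>' Z)) / real N) \<longlonglongrightarrow> 1"
    by (rule AE_distrD[OF measurable_interleave_seq])
  moreover have "AE Z in iid_seq R. (\<lambda>N. real (hits b' Z N) / real N) \<longlonglongrightarrow> s'"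
    using coin' s' by (intro AE_hits_tendsto) auto
  moreover have "AE Z in iid_seq R. (\<lambda>N. real (hits b Z N) / real N) \<longlonglongrightarrow> s"
    using coin s by (intro AE_hits_tendsto) auto
  ultimately have "AE Z in iid_seq R. (\<lambda>N. est (counts L N (?\<Phi> Z)) / real N) \<longlonglongrightarrow> s / s'"
  proof eventually_elim
    case (elim Z)
    show ?case
      using tendsto_est_interleave_seq[OF elim[unfolded z_def] s'(1) s(1)] by (simp add: z_def)
  qed
  moreover have "Measurable.pred (iid_seq (zero_inflated s Q z))
      (\<lambda>\<omega>. (\<lambda>N. est (counts L N \<omega>) / real N) \<longlonglongrightarrow> s / s')"
    by (intro pred_tendsto_real measurable_est_counts)
  ultimately have "AE \<omega> in distr (iid_seq R) (iid_seq (zero_inflated s Q z)) ?\<Phi>.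
      (\<lambda>N. est (counts L N \<omega>) / real N) \<longlonglongrightarrow> s / s'"
    by (subst AE_distr_iff[OF measurable_interleave_seq]) (auto simp: pred_def)
  then show ?thesis
    unfolding z_def[symmetric] by (simp only: D)
qed

lemma tendsto_relative_error:
  fixes f :: "nat \<Rightarrow> real"
  assumes "(\<lambda>N. f N / real N) \<longlonglongrightarrow> l"
  shows "(\<lambda>N. (f N - real N) / real N) \<longlonglongrightarrow> l - 1"
proof (rule Lim_transform_eventually)
  show "(\<lambda>N. f N / real N - 1) \<longlonglongrightarrow> l - 1"
    using assms by (intro tendsto_diff tendsto_const)
  show "eventually (\<lambda>N. f N / real N - 1 = (f N - real N) / real N) sequentially"
    using eventually_gt_at_top[of 0] by eventually_elim (simp add: diff_divide_distrib)
qed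

theorem AE_relative_bias:
  fixes P :: "bool list pmf" and est :: "(bool list \<Rightarrow> nat) \<Rightarrow> real"
  assumes cons: "consistent L est" and L: "L > 0" and supp: "set_pmf P \<subseteq> patterns L"
    and pos: "\<And>x. x \<in> patterns L \<Longrightarrow> pmf P x > 0"
  shows "AE \<omega> in iid P. (\<lambda>N. (est (counts L N \<omega>) - real N) / real N) \<longlonglongrightarrow>
    pmf P (replicate L False) * (exp (gamma L P) - 1)"
proof -
  define z where "z = replicate L False"
  define Q where "Q = cond_pmf P (- {z})"
  define q where "q = pmf P z"
  note decomposition = zero_inflated_decomposition[OF L supp pos, folded z_def, folded Q_def q_def]
  note P = decomposition(1) and q = decomposition(2,3) and z_Q = decomposition(4)
    and supp_Q = decomposition(5) and pos_Q = decomposition(6)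
  define G where "G = (\<Sum>x\<in>patterns L - {z}. (-1) ^ (wt x + 1) * ln (pmf Q x))"
  have gamma_P: "gamma L P = ln ((1 - q) / q) + G"
    using gamma_zero_inflated[OF L, of "1 - q" Q] q z_Q pos_Q
    by (simp add: G_def z_def P[unfolded z_def])
  define s' where "s' = 1 / (1 + exp G)"
  have "0 < 1 + exp G"
    using exp_gt_zero[of G] by linarith
  then have s': "0 < s'" "s' \<le> 1"
    by (simp_all add: s'_def divide_le_eq)
  have bias: "(1 - q) / s' - 1 = q * (exp (gamma L P) - 1)"
    using q by (simp add: gamma_P s'_def exp_add field_simps)
  have "in_model L (zero_inflated s' Q z)"
    using in_model_zero_inflated[OF L, of Q] z_Q supp_Q pos_Q by (simp add: s'_def G_def z_def)
  then have "AE \<omega> in iid_seq (zero_inflated s' Q z).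
      (\<lambda>N. est (counts L N \<omega>) / real N) \<longlonglongrightarrow> 1"
    using cons unfolding consistent_def iid_eq_iid_seq by blast
  then have "AE \<omega> in iid_seq (zero_inflated (1 - q) Q z).
      (\<lambda>N. est (counts L N \<omega>) / real N) \<longlonglongrightarrow> (1 - q) / s'"
    using AE_tendsto_est_zero_inflated[where s = "1 - q" and Q = Q and L = L, folded z_def] q s'
    by simp
  then have "AE \<omega> in iid P. (\<lambda>N. est (counts L N \<omega>) / real N) \<longlonglongrightarrow> (1 - q) / s'"
    by (simp only: P iid_eq_iid_seq)
  then have "AE \<omega> in iid P.
      (\<lambda>N. (est (counts L N \<omega>) - real N) / real N) \<longlonglongrightarrow> q * (exp (gamma L P) - 1)"
    unfolding bias[symmetric] by (auto elim!: eventually_mono intro: tendsto_relative_error)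
  then show ?thesis
    by (simp only: q_def z_def)
qed

section \<open>The latent heterogeneity model\<close>

definition het_moment :: "nat \<Rightarrow> real measure \<Rightarrow> nat \<Rightarrow> real" where
  "het_moment L F k = (LINT l|F. l ^ k * (1 - l) ^ (L - k))"

lemma mixing_distD:
  assumes "mixing_dist F"
  shows "prob_space F" "sets F = sets borel" "space F = UNIV" "AE l in F. l \<in> {0<..1}"
proof -
  show "prob_space F" and sets: "sets F = sets borel"
    using assms by (auto simp: mixing_dist_def)
  then show "space F = UNIV"
    using sets_eq_imp_space_eq[OF sets] by simp
  have "prob_space F" "measure F {0<..1} = 1"
    using assms by (auto simp: mixing_dist_def)
  then show "AE l in F. l \<in> {0<..1}"
    by (rule prob_space.AE_prob_1)
qed

lemma integrable_mixing_dist_poly: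
  assumes "mixing_dist F"
  shows "integrable F (\<lambda>l. l ^ k * (1 - l) ^ j)"
proof -
  interpret prob_space F
    using mixing_distD(1)[OF assms] .
  show ?thesis
  proof (rule integrable_const_bound[where B = 1])
    show "AE l in F. norm (l ^ k * (1 - l) ^ j) \<le> 1"
      using mixing_distD(4)[OF assms]
      by eventually_elim (auto simp: abs_mult intro!: mult_le_one power_le_one)
    have "(\<lambda>l::real. l ^ k * (1 - l) ^ j) \<in> borel_measurable borel"
      by measurable
    then show "(\<lambda>l. l ^ k * (1 - l) ^ j) \<in> borel_measurable F"
      using mixing_distD(2)[OF assms] by (simp cong: measurable_cong_sets)
  qed
qed

lemma het_moment_nonneg:
  assumes "mixing_dist F"
  shows "0 \<le> het_moment L F k"
proof -
  have "AE l in F. 0 \<le> l ^ k * (1 - l) ^ (L - k)"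
    using mixing_distD(4)[OF assms] by eventually_elim auto
  then show ?thesis
    unfolding het_moment_def by (rule integral_nonneg_AE)
qed

lemma het_moment_pos:
  assumes F: "mixing_dist F" and F1: "measure F {1} < 1"
  shows "0 < het_moment L F k"
proof -
  interpret prob_space F
    using mixing_distD(1)[OF F] .
  have nonneg: "AE l in F. 0 \<le> l ^ k * (1 - l) ^ (L - k)"
    using mixing_distD(4)[OF F] by eventually_elim auto
  have "het_moment L F k \<noteq> 0"
  proof
    assume "het_moment L F k = 0"
    then have "AE l in F. l ^ k * (1 - l) ^ (L - k) = 0"
      unfolding het_moment_def
      using integral_nonneg_eq_0_iff_AE[OF integrable_mixing_dist_poly[OF F] nonneg] by simp
    with mixing_distD(4)[OF F] have "AE l in F. l \<in> {1}"
      by eventually_elim auto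
    then have "prob {1} = 1"
      using mixing_distD(2,3)[OF F] by (subst prob_eq_1) auto
    with F1 show False
      by simp
  qed
  with het_moment_nonneg[OF F] show ?thesis
    by (simp add: order_less_le)
qed

lemma pmf_het_pmf:
  assumes F: "mixing_dist F"
  shows "pmf (het_pmf L F) x = (if x \<in> patterns L then het_moment L F (wt x) else 0)"
proof -
  interpret prob_space F
    using mixing_distD(1)[OF F] .
  define f where "f x = (if x \<in> patterns L then het_moment L F (wt x) else 0)" for x
  have nonneg: "0 \<le> f x" for x
    by (simp add: f_def het_moment_nonneg[OF F])
  have "(\<Sum>x\<in>patterns L. f x) = (LINT l|F. (\<Sum>x\<in>patterns L. l ^ wt x * (1 - l) ^ (L - wt x)))"
    by (simp add: f_def het_moment_def integrable_mixing_dist_poly[OF F])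
  also have "\<dots> = 1"
    by (simp add: sum_patterns_binomial prob_space)
  finally have "(\<integral>\<^sup>+x. ennreal (f x) \<partial>count_space UNIV) = 1"
    using nonneg by (subst nn_integral_count_space'[of "patterns L"]) (auto simp: f_def sum_ennreal het_moment_nonneg[OF F])
  moreover have "het_pmf L F = embed_pmf f"
    unfolding het_pmf_def by (rule arg_cong[where f = embed_pmf]) (simp add: fun_eq_iff f_def het_moment_def)
  ultimately have "pmf (het_pmf L F) x = f x"
    using pmf_embed_pmf[OF nonneg] by simp
  then show ?thesis
    by (simp add: f_def)
qed

lemma gamma_het_pmf:
  assumes "mixing_dist F"
  shows "gamma L (het_pmf L F) =
    (\<Sum>k\<le>L. real (L choose k) * ((-1) ^ (k + 1) * ln (het_moment L F k)))"
proof -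
  have "gamma L (het_pmf L F) = (\<Sum>x\<in>patterns L. (-1) ^ (wt x + 1) * ln (het_moment L F (wt x)))"
    unfolding gamma_def by (rule sum.cong) (auto simp: pmf_het_pmf[OF assms])
  also have "\<dots> = (\<Sum>k\<le>L. real (L choose k) * ((-1) ^ (k + 1) * ln (het_moment L F k)))"
    by (rule sum_patterns_wt)
  finally show ?thesis .
qed

lemma asymp_rel_bias_het_pmf:
  assumes cons: "consistent L est" and L: "L > 0" and F: "mixing_dist F" "measure F {1} < 1"
  shows "\<exists>c. asymp_rel_bias L est F c \<and>
    (0 < c \<longleftrightarrow> 0 < gamma L (het_pmf L F)) \<and> (c < 0 \<longleftrightarrow> gamma L (het_pmf L F) < 0)"
proof -
  let ?P = "het_pmf L F"
  have pos: "pmf ?P x > 0" if "x \<in> patterns L" for x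
    using that by (simp add: pmf_het_pmf het_moment_pos F)
  have "set_pmf ?P \<subseteq> patterns L"
    by (auto simp: set_pmf_eq pmf_het_pmf F split: if_splits)
  then have "asymp_rel_bias L est F (pmf ?P (replicate L False) * (exp (gamma L ?P) - 1))"
    unfolding asymp_rel_bias_def using AE_relative_bias[OF cons L _ pos] by blast
  moreover have "pmf ?P (replicate L False) > 0"
    by (simp add: pos)
  ultimately show ?thesis
    by (intro exI[of _ "pmf ?P (replicate L False) * (exp (gamma L ?P) - 1)"])
      (auto simp: zero_less_mult_iff mult_less_0_iff)
qed

lemma het_moment_two_lists_square_le:
  assumes F: "mixing_dist F" "measure F {1} < 1"
  shows "het_moment 2 F 1 ^ 2 \<le> het_moment 2 F 0 * het_moment 2 F 2"
proof -
  interpret prob_space F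
    using mixing_distD(1)[OF F(1)] .
  define p where "p k l = l ^ k * (1 - l) ^ (2 - k)" for k and l :: real
  define m where "m k = het_moment 2 F k" for k
  have m: "m k = (LINT l|F. p k l)" for k
    by (simp add: m_def het_moment_def p_def)
  have int: "integrable F (p k)" for k
    unfolding p_def by (rule integrable_mixing_dist_poly[OF F(1)])
  have pos: "0 < m k" for k
    unfolding m_def by (rule het_moment_pos[OF F])
  define a where "a = m 1 / m 2"
  have "(LINT l|F. 2 * a * p 1 l) \<le> (LINT l|F. a\<^sup>2 * p 2 l + p 0 l)"
  proof (intro Bochner_Integration.integral_mono Bochner_Integration.integrable_add
      integrable_mult_right int)
    fix l :: real
    have "0 \<le> (a * l - (1 - l))\<^sup>2"
      by simp
    then show "2 * a * p 1 l \<le> a\<^sup>2 * p 2 l + p 0 l"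
      by (simp add: p_def power2_eq_square algebra_simps)
  qed
  also have "(LINT l|F. a\<^sup>2 * p 2 l + p 0 l) = a\<^sup>2 * m 2 + m 0"
    by (simp add: m int)
  finally have "2 * a * m 1 \<le> a\<^sup>2 * m 2 + m 0"
    by (simp add: m)
  moreover have "a\<^sup>2 * m 2 = a * m 1"
    using pos[of 2] by (simp add: a_def power2_eq_square)
  ultimately have "m 1 * m 1 / m 2 \<le> m 0"
    by (simp add: a_def)
  then show ?thesis
    using pos[of 2] by (simp add: m_def pos_divide_le_eq power2_eq_square)
qed

lemma gamma_het_pmf_two_lists:
  assumes F: "mixing_dist F" "measure F {1} < 1"
  shows "gamma 2 (het_pmf 2 F) \<le> 0"
proof -
  define m where "m k = het_moment 2 F k" for k
  have pos: "0 < m k" for k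
    unfolding m_def by (rule het_moment_pos[OF F])
  have "ln (m 1 ^ 2) \<le> ln (m 0 * m 2)"
    using het_moment_two_lists_square_le[OF F] pos[of 0] pos[of 1] pos[of 2] by (simp add: m_def)
  then have "2 * ln (m 1) \<le> ln (m 0) + ln (m 2)"
    using pos[of 0] pos[of 1] pos[of 2] by (simp add: ln_mult ln_realpow)
  moreover have "gamma 2 (het_pmf 2 F) = 2 * ln (m 1) - ln (m 0) - ln (m 2)"
    by (simp add: gamma_het_pmf[OF F(1)] m_def numeral_2_eq_2)
  ultimately show ?thesis
    by simp
qed

definition two_point :: "real \<Rightarrow> real \<Rightarrow> real measure" where
  "two_point u v = distr (measure_pmf (bernoulli_pmf (1/2))) borel (\<lambda>c. if c then u else v)"

lemma integral_two_point:
  fixes f :: "real \<Rightarrow> real"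
  assumes "f \<in> borel_measurable borel"
  shows "(LINT l|two_point u v. f l) = (f u + f v) / 2"
  unfolding two_point_def using assms by (simp add: integral_distr)

lemma mixing_dist_two_point:
  assumes "0 < u" "u \<le> 1" "0 < v" "v < 1"
  shows "mixing_dist (two_point u v)" and "measure (two_point u v) {1} < 1"
proof -
  have meas: "(\<lambda>c. if c then u else v) \<in> measurable (measure_pmf (bernoulli_pmf (1/2))) borel"
    by simp
  have "measure (two_point u v) {0<..1} = 1"
    using assms by (simp add: two_point_def measure_distr vimage_def)
  then show "mixing_dist (two_point u v)"
    unfolding mixing_dist_def two_point_def
    by (simp add: prob_space.prob_space_distr[OF measure_pmf.prob_space_axioms meas])
  have "measure (two_point u v) {1} \<le> measure_pmf.prob (bernoulli_pmf (1/2)) {True}"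
    using assms by (simp add: two_point_def measure_distr vimage_def)
      (intro measure_pmf.finite_measure_mono, auto)
  then show "measure (two_point u v) {1} < 1"
    by (simp add: measure_pmf_single)
qed

lemma het_moment_two_point:
  "het_moment L (two_point u v) k = (u ^ k * (1 - u) ^ (L - k) + v ^ k * (1 - v) ^ (L - k)) / 2"
  unfolding het_moment_def by (rule integral_two_point) measurable

lemma gamma_het_pmf_atom_at_one:
  assumes L: "L \<ge> 2"
  shows "(-1) ^ (L + 1) * gamma L (het_pmf L (two_point 1 (1/2))) > 0"
proof -
  define p :: real where "p = (1/2) ^ L / 2"
  define D where "D = ln (1/2 + p) - ln p"
  have p: "p > 0"
    by (simp add: p_def)
  then have D: "D > 0"
    by (simp add: D_def)
  have moment: "het_moment L (two_point 1 (1/2)) k = (if k = L then 1/2 + p else p)" if "k \<le> L" for k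
    using that by (auto simp: het_moment_two_point p_def simp flip: power_add)
  have "gamma L (het_pmf L (two_point 1 (1/2))) =
      (\<Sum>k\<le>L. real (L choose k) * ((-1) ^ (k + 1) * ln (het_moment L (two_point 1 (1/2)) k)))"
    using mixing_dist_two_point[of 1 "1/2"] by (simp add: gamma_het_pmf)
  also have "\<dots> = (-1) ^ L * (real L * 0 - D)"
    using L p moment by (subst alternating_binomial_sum_affine_prefix[where a = "ln p" and c = 0])
      (auto simp: D_def)
  finally show ?thesis
    using D by (simp flip: power_add)
qed

lemma two_point_moment_bounds:
  fixes a b :: real
  assumes a: "0 < a" "a \<le> 1/2" and b: "0 < b" "b \<le> 1/2" and k: "k \<le> L"
  defines "M \<equiv> max (a ^ k) (b ^ (L - k))"
  shows "het_moment L (two_point (1 - b) a) k \<le> M"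
    and "(1/2) ^ (L + 1) * M \<le> het_moment L (two_point (1 - b) a) k"
proof -
  have moment: "het_moment L (two_point (1 - b) a) k =
      ((1 - b) ^ k * b ^ (L - k) + a ^ k * (1 - a) ^ (L - k)) / 2"
    by (simp add: het_moment_two_point)
  have "a ^ k * (1 - a) ^ (L - k) \<le> a ^ k" and "(1 - b) ^ k * b ^ (L - k) \<le> b ^ (L - k)"
    using a b by (auto intro!: mult_left_le mult_left_le_one_le power_le_one)
  moreover have "a ^ k \<le> M" and "b ^ (L - k) \<le> M"
    by (simp_all add: M_def)
  ultimately have "(1 - b) ^ k * b ^ (L - k) + a ^ k * (1 - a) ^ (L - k) \<le> 2 * M"
    by linarith
  then show "het_moment L (two_point (1 - b) a) k \<le> M"
    unfolding moment by simp
  have "(1/2) ^ L \<le> (1 - a) ^ (L - k)" and "(1/2) ^ L \<le> (1 - b) ^ k"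
    using a b k by (auto intro: order.trans[OF power_decreasing power_mono])
  then have "(1/2) ^ L * a ^ k \<le> a ^ k * (1 - a) ^ (L - k)"
    and "(1/2) ^ L * b ^ (L - k) \<le> (1 - b) ^ k * b ^ (L - k)"
    using a b by (simp_all add: mult.commute mult_right_mono)
  moreover have "0 \<le> a ^ k * (1 - a) ^ (L - k)" and "0 \<le> (1 - b) ^ k * b ^ (L - k)"
    using a b by simp_all
  ultimately have "(1/2) ^ L * M \<le> (1 - b) ^ k * b ^ (L - k) + a ^ k * (1 - a) ^ (L - k)"
    unfolding M_def max_def by (auto split: if_splits)
  then show "(1/2) ^ (L + 1) * M \<le> het_moment L (two_point (1 - b) a) k"
    unfolding moment by simp
qed

lemma max_powers:
  fixes \<epsilon> :: real
  assumes "0 \<le> \<epsilon>" "\<epsilon> \<le> 1"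
  shows "max (\<epsilon> ^ i) (\<epsilon> ^ j) = \<epsilon> ^ min i j"
  using assms
  by (cases "i \<le> j") (simp_all add: max_absorb1 max_absorb2 min_absorb1 min_absorb2 power_decreasing)

lemma ln_het_moment_two_point_powers:
  fixes \<epsilon> :: real
  assumes \<epsilon>: "0 < \<epsilon>" "\<epsilon> \<le> 1/2" and \<alpha>: "1 \<le> \<alpha>" and \<beta>: "1 \<le> \<beta>" and k: "k \<le> L"
  defines "g \<equiv> min (\<alpha> * k) (\<beta> * (L - k))"
  shows "\<bar>ln (het_moment L (two_point (1 - \<epsilon> ^ \<beta>) (\<epsilon> ^ \<alpha>)) k) - real g * ln \<epsilon>\<bar>
    \<le> (real L + 1) * ln 2"
proof -
  define m where "m = het_moment L (two_point (1 - \<epsilon> ^ \<beta>) (\<epsilon> ^ \<alpha>)) k"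
  have "\<epsilon> ^ \<alpha> \<le> \<epsilon> ^ 1" "\<epsilon> ^ \<beta> \<le> \<epsilon> ^ 1"
    using \<epsilon> \<alpha> \<beta> by (intro power_decreasing; simp)+
  moreover have "max ((\<epsilon> ^ \<alpha>) ^ k) ((\<epsilon> ^ \<beta>) ^ (L - k)) = \<epsilon> ^ g"
    using max_powers[of \<epsilon> "\<alpha> * k" "\<beta> * (L - k)"] \<epsilon> by (simp add: g_def flip: power_mult)
  ultimately have up: "m \<le> \<epsilon> ^ g" and low: "(1/2) ^ (L + 1) * \<epsilon> ^ g \<le> m"
    using two_point_moment_bounds[where a = "\<epsilon> ^ \<alpha>" and b = "\<epsilon> ^ \<beta>", OF _ _ _ _ k] \<epsilon>
    by (simp_all add: m_def)
  have pos: "0 < (1/2::real) ^ (L + 1) * \<epsilon> ^ g"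
    using \<epsilon> by simp
  have "ln m \<le> ln (\<epsilon> ^ g)"
    using up pos low by simp
  moreover have "ln ((1/2::real) ^ (L + 1) * \<epsilon> ^ g) \<le> ln m"
    using low pos by simp
  ultimately show ?thesis
    using \<epsilon> by (simp add: m_def ln_mult ln_realpow ln_div abs_le_iff algebra_simps)
qed

lemma mixing_dist_two_point_powers:
  fixes \<epsilon> :: real
  assumes \<epsilon>: "0 < \<epsilon>" "\<epsilon> < 1" and \<alpha>: "1 \<le> \<alpha>" and \<beta>: "1 \<le> \<beta>"
  shows "mixing_dist (two_point (1 - \<epsilon> ^ \<beta>) (\<epsilon> ^ \<alpha>))"
    and "measure (two_point (1 - \<epsilon> ^ \<beta>) (\<epsilon> ^ \<alpha>)) {1} < 1"
proof -
  have "\<epsilon> ^ \<alpha> \<le> \<epsilon> ^ 1" "\<epsilon> ^ \<beta> \<le> \<epsilon> ^ 1"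
    using \<epsilon> \<alpha> \<beta> by (intro power_decreasing; simp)+
  then have u: "0 < 1 - \<epsilon> ^ \<beta>" "1 - \<epsilon> ^ \<beta> \<le> 1" and v: "0 < \<epsilon> ^ \<alpha>" "\<epsilon> ^ \<alpha> < 1"
    using \<epsilon> by auto
  show "mixing_dist (two_point (1 - \<epsilon> ^ \<beta>) (\<epsilon> ^ \<alpha>))"
    by (rule mixing_dist_two_point(1)[OF u v])
  show "measure (two_point (1 - \<epsilon> ^ \<beta>) (\<epsilon> ^ \<alpha>)) {1} < 1"
    by (rule mixing_dist_two_point(2)[OF u v])
qed

lemma alternating_binomial_sum_kink:
  assumes L: "L \<ge> 3"
  shows "(\<Sum>k\<le>L. real (L choose k) * ((-1) ^ (k + 1) * real (min (2 * k) ((L - 2) * (L - k))))) =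
    (-1) ^ L * (real L * (2 - real L))"
proof -
  define g where "g k = min (2 * k) ((L - 2) * (L - k))" for k
  have g_linear: "g k = 2 * k" if "k \<le> L - 2" for k
  proof -
    have "2 \<le> L - k"
      using that L by arith
    then have "(L - 2) * 2 \<le> (L - 2) * (L - k)"
      by (rule mult_le_mono2)
    moreover have "2 * k \<le> (L - 2) * 2"
      using that by simp
    ultimately have "2 * k \<le> (L - 2) * (L - k)"
      by linarith
    then show ?thesis
      by (simp add: g_def)
  qed
  have "(\<Sum>k\<le>L. real (L choose k) * ((-1) ^ (k + 1) * real (g k))) =
      (-1) ^ L * (real L * (real (g (L - 1)) - (0 + 2 * real (L - 1))) - (real (g L) - (0 + 2 * real L)))"
    using L by (intro alternating_binomial_sum_affine_prefix) (auto simp: g_linear)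
  also have "\<dots> = (-1) ^ L * (real L * (2 - real L))"
    using L by (simp add: g_def of_nat_diff algebra_simps)
  finally show ?thesis
    by (simp add: g_def)
qed

lemma abs_alternating_binomial_sum_le:
  fixes r :: "nat \<Rightarrow> real"
  assumes "\<And>k. k \<le> L \<Longrightarrow> \<bar>r k\<bar> \<le> C"
  shows "\<bar>\<Sum>k\<le>L. real (L choose k) * ((-1) ^ (k + 1) * r k)\<bar> \<le> 2 ^ L * C"
proof -
  have "\<bar>\<Sum>k\<le>L. real (L choose k) * ((-1) ^ (k + 1) * r k)\<bar> \<le> (\<Sum>k\<le>L. real (L choose k) * C)"
    by (rule order.trans[OF sum_abs sum_mono]) (simp add: abs_mult assms)
  also have "\<dots> = 2 ^ L * C"
    by (simp add: choose_row_sum flip: sum_distrib_right of_nat_sum)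
  finally show ?thesis .
qed

lemma gamma_het_pmf_near_endpoints:
  assumes L: "L \<ge> 3"
  defines "\<epsilon> \<equiv> (1/2::real) ^ (2 ^ L * (L + 1))"
  defines "F \<equiv> two_point (1 - \<epsilon> ^ (L - 2)) (\<epsilon> ^ 2)"
  shows "mixing_dist F" "measure F {1} < 1" "(-1) ^ L * gamma L (het_pmf L F) > 0"
proof -
  define B where "B = 2 ^ L * (real L + 1) * ln 2"
  have B: "B > 0"
    by (simp add: B_def)
  have ln_\<epsilon>: "ln \<epsilon> = - B"
    by (simp add: \<epsilon>_def B_def ln_realpow ln_div algebra_simps)
  have "(1::nat) \<le> 2 ^ L * (L + 1)"
    by (simp add: Suc_le_eq)
  then have \<epsilon>: "0 < \<epsilon>" "\<epsilon> \<le> 1/2"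
    unfolding \<epsilon>_def using power_decreasing[of 1 "2 ^ L * (L + 1)" "1/2::real"] by simp_all
  show F: "mixing_dist F" "measure F {1} < 1"
    unfolding F_def using \<epsilon> L by (intro mixing_dist_two_point_powers; simp)+
  define r where "r k = ln (het_moment L F k) - real (min (2 * k) ((L - 2) * (L - k))) * ln \<epsilon>" for k
  define D where "D = (\<Sum>k\<le>L. real (L choose k) * ((-1) ^ (k + 1) * real (min (2 * k) ((L - 2) * (L - k)))))"
  define E where "E = (\<Sum>k\<le>L. real (L choose k) * ((-1) ^ (k + 1) * r k))"
  have r: "\<bar>r k\<bar> \<le> (real L + 1) * ln 2" if "k \<le> L" for k
    unfolding r_def F_def
    using ln_het_moment_two_point_powers[where \<alpha> = 2 and \<beta> = "L - 2", OF \<epsilon> _ _ that] L by simp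
  have "gamma L (het_pmf L F) = (\<Sum>k\<le>L. real (L choose k) * ((-1) ^ (k + 1) *
      (real (min (2 * k) ((L - 2) * (L - k))) * ln \<epsilon> + r k)))"
    by (simp add: gamma_het_pmf[OF F(1)] r_def)
  also have "\<dots> = ln \<epsilon> * D + E"
    by (simp add: D_def E_def sum_distrib_left algebra_simps flip: sum.distrib)
  finally have gamma: "gamma L (het_pmf L F) = - B * D + E"
    by (simp add: ln_\<epsilon>)
  have D: "(-1) ^ L * D = real L * (2 - real L)"
    unfolding D_def alternating_binomial_sum_kink[OF L] by (simp flip: power_add)
  have "\<bar>E\<bar> \<le> 2 ^ L * ((real L + 1) * ln 2)"
    unfolding E_def by (rule abs_alternating_binomial_sum_le) (rule r)
  then have "\<bar>(-1) ^ L * E\<bar> \<le> B"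
    by (simp add: B_def abs_mult mult.assoc)
  then have E: "- B \<le> (-1) ^ L * E"
    unfolding abs_le_iff by linarith
  have "3 * 1 \<le> real L * (real L - 2)"
    using L by (intro mult_mono) auto
  then have D_large: "3 * B \<le> B * (real L * (real L - 2))"
    using B by (simp add: mult.commute)
  have "(-1) ^ L * gamma L (het_pmf L F) = - B * ((-1) ^ L * D) + (-1) ^ L * E"
    by (simp add: gamma algebra_simps)
  also have "\<dots> = B * (real L * (real L - 2)) + (-1) ^ L * E"
    by (simp only: D) (simp add: algebra_simps)
  finally show "(-1) ^ L * gamma L (het_pmf L F) > 0"
    using B D_large E by linarith
qed

lemma het_pmf_gamma_signs:
  assumes L: "L \<ge> 3"
  shows "\<exists>F. mixing_dist F \<and> measure F {1} < 1 \<and> gamma L (het_pmf L F) > 0"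
    and "\<exists>F. mixing_dist F \<and> measure F {1} < 1 \<and> gamma L (het_pmf L F) < 0"
proof -
  define F\<^sub>1 where "F\<^sub>1 = two_point 1 (1/2)"
  have F\<^sub>1: "mixing_dist F\<^sub>1" "measure F\<^sub>1 {1} < 1"
    using mixing_dist_two_point[of 1 "1/2"] by (simp_all add: F\<^sub>1_def)
  have \<gamma>\<^sub>1: "(-1) ^ (L + 1) * gamma L (het_pmf L F\<^sub>1) > 0"
    unfolding F\<^sub>1_def using L by (intro gamma_het_pmf_atom_at_one) simp
  obtain F\<^sub>2 where F\<^sub>2: "mixing_dist F\<^sub>2" "measure F\<^sub>2 {1} < 1"
    and \<gamma>\<^sub>2: "(-1) ^ L * gamma L (het_pmf L F\<^sub>2) > 0"
    using gamma_het_pmf_near_endpoints[OF L] by blast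
  show "\<exists>F. mixing_dist F \<and> measure F {1} < 1 \<and> gamma L (het_pmf L F) > 0"
    and "\<exists>F. mixing_dist F \<and> measure F {1} < 1 \<and> gamma L (het_pmf L F) < 0"
    using F\<^sub>1 F\<^sub>2 \<gamma>\<^sub>1 \<gamma>\<^sub>2 by (cases "even L"; force)+
qed

theorem proposition2:
  fixes L :: nat and est :: "(bool list \<Rightarrow> nat) \<Rightarrow> real"
  assumes "consistent L est"
  shows "(L = 2 \<longrightarrow> (\<forall>F. mixing_dist F \<and> measure F {1} < 1 \<longrightarrow>
              (\<exists>c. c \<le> 0 \<and> asymp_rel_bias L est F c)))
       \<and> (L \<ge> 3 \<longrightarrow>
              (\<exists>F c. mixing_dist F \<and> measure F {1} < 1 \<and> c > 0 \<and> asymp_rel_bias L est F c)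
            \<and> (\<exists>F c. mixing_dist F \<and> measure F {1} < 1 \<and> c < 0 \<and> asymp_rel_bias L est F c))"
proof (intro conjI impI allI)
  have bias: "\<exists>c. asymp_rel_bias L est F c \<and>
      (0 < c \<longleftrightarrow> 0 < gamma L (het_pmf L F)) \<and> (c < 0 \<longleftrightarrow> gamma L (het_pmf L F) < 0)"
    if "L > 0" "mixing_dist F" "measure F {1} < 1" for F
    using asymp_rel_bias_het_pmf[OF assms that] .
  show "\<exists>c. c \<le> 0 \<and> asymp_rel_bias L est F c"
    if "L = 2" "mixing_dist F \<and> measure F {1} < 1" for F
  proof -
    from that have "\<exists>c. asymp_rel_bias L est F c \<and>
        (0 < c \<longleftrightarrow> 0 < gamma L (het_pmf L F)) \<and> (c < 0 \<longleftrightarrow> gamma L (het_pmf L F) < 0)"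
      by (intro bias) auto
    then obtain c where "asymp_rel_bias L est F c" "0 < c \<longleftrightarrow> 0 < gamma L (het_pmf L F)"
      by blast
    moreover have "gamma L (het_pmf L F) \<le> 0"
      using gamma_het_pmf_two_lists[of F] that by simp
    ultimately show ?thesis
      by (intro exI[of _ c]) auto
  qed
  assume L: "L \<ge> 3"
  show "\<exists>F c. mixing_dist F \<and> measure F {1} < 1 \<and> c > 0 \<and> asymp_rel_bias L est F c"
    using het_pmf_gamma_signs(1)[OF L] bias L by fastforce
  show "\<exists>F c. mixing_dist F \<and> measure F {1} < 1 \<and> c < 0 \<and> asymp_rel_bias L est F c"
    using het_pmf_gamma_signs(2)[OF L] bias L by fastforce
qed

end
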